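(* Let $P$ be a possibilistic positive disjunctive logic program. If $\Gamma_0:=\mathcal T(P)$ and $\Gamma_i:=\mathcal T(\Gamma_{i-1})$ for $i\in\mathbb N$, then there exists $n\in\mathbb N$ such that $\Gamma_n=\Gamma_{n-1}$. (This $\Gamma_n$ is denoted $\Pi(P)$.)
   Context: $(\mathcal Q,\le)$ is a finite lattice; $\mathrm{GLB}$ denotes greatest lower bound. A possibilistic positive disjunctive logic program is a finite set (over a finite set of atoms) of clauses $\alpha:\mathcal A\leftarrow\mathcal B^+$ with $\alpha\in\mathcal Q$, $\mathcal A,\mathcal B^+$ finite sets of atoms; $n(r)=\alpha$. A clause is identified with the triple $(\alpha,\mathcal A,\mathcal B^+)$. G-GPPE: if $r_1=\alpha:\mathcal A\leftarrow\mathcal B^+\cup\{B\}$ and $r_2=\alpha_1:\mathcal A_1$ (empty body) with $B\in\mathcal A_1$ and $B\notin\mathcal B^+$, then $\text{G-GPPE}(r_1,r_2)=(\mathrm{GLB}\{\alpha,\alpha_1\}:\mathcal A\cup(\mathcal A_1\setminus\{B\})\leftarrow\mathcal B^+)$. The operator $\mathcal T(P):=P\cup\{\text{G-GPPE}(r_1,r_2): r_1,r_2\in P \text{ for which it is defined}\}$. *)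

theory Defs
  imports Main
begin

text \<open>A possibilistic clause  alpha : A <- B+  is the triple (alpha, A, B+).
  The lattice of necessity values is a finite lattice 'q; GLB is inf.\<close>

type_synonym ('q, 'a) clause = "'q \<times> 'a set \<times> 'a set"

definition n_of :: "('q, 'a) clause \<Rightarrow> 'q" where
  "n_of r = fst r"

definition ppdlp :: "('q, 'a) clause set \<Rightarrow> bool" where
  "ppdlp P \<longleftrightarrow> finite P \<and> (\<forall>(\<alpha>, A, B) \<in> P. finite A \<and> finite B)"

definition ggppe :: "('q::lattice, 'a) clause \<Rightarrow> ('q, 'a) clause \<Rightarrow> ('q, 'a) clause \<Rightarrow> bool" where
  "ggppe r1 r2 c \<longleftrightarrow>
     (\<exists>\<alpha> A Bp B \<alpha>1 A1.
        r1 = (\<alpha>, A, Bp \<union> {B}) \<and> r2 = (\<alpha>1, A1, {}) \<and> B \<in> A1 \<and> B \<notin> Bp \<and>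
        c = (inf \<alpha> \<alpha>1, A \<union> (A1 - {B}), Bp))"

definition T_op :: "('q::lattice, 'a) clause set \<Rightarrow> ('q, 'a) clause set" where
  "T_op P = P \<union> {c. \<exists>r1\<in>P. \<exists>r2\<in>P. ggppe r1 r2 c}"

definition Gamma :: "('q::lattice, 'a) clause set \<Rightarrow> nat \<Rightarrow> ('q, 'a) clause set" where
  "Gamma P i = (T_op ^^ Suc i) P"

end

theory Submission
  imports Defs
begin

text \<open>Every G-GPPE resolvent only uses atoms of its premises, so all iterates of
  \<open>T\<close> are clauses over the finitely many atoms of \<open>P\<close>; with a finite lattice of
  necessity values there are only finitely many such clauses. The iterates form
  an increasing chain in this finite set, so it cannot grow forever.\<close>

lemma inflationary_funpow_stabilises:
  fixes f :: "'a set \<Rightarrow> 'a set"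
  assumes inflationary: "\<And>X. X \<subseteq> f X"
    and bounded: "\<And>k. (f ^^ k) S \<subseteq> U"
    and "finite U"
  shows "\<exists>n. (f ^^ Suc n) S = (f ^^ n) S"
proof (rule ccontr)
  assume "\<nexists>n. (f ^^ Suc n) S = (f ^^ n) S"
  then have grows: "(f ^^ k) S \<subset> (f ^^ Suc k) S" for k
    using inflationary[of "(f ^^ k) S"] by auto
  have finite_iterate: "finite ((f ^^ k) S)" for k
    using bounded \<open>finite U\<close> by (rule finite_subset)
  have card_growth: "k \<le> card ((f ^^ k) S)" for k
  proof (induction k)
    case (Suc k)
    then show ?case
      using psubset_card_mono[OF finite_iterate grows[of k]] by simp
  qed simp
  have "Suc (card U) \<le> card ((f ^^ Suc (card U)) S)"
    by (rule card_growth)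
  also have "\<dots> \<le> card U"
    using \<open>finite U\<close> bounded by (rule card_mono)
  finally show False by simp
qed

definition atoms :: "('q, 'a) clause set \<Rightarrow> 'a set" where
  "atoms P = (\<Union>(\<alpha>, A, B) \<in> P. A \<union> B)"

definition clauses_over :: "'a set \<Rightarrow> ('q, 'a) clause set" where
  "clauses_over X = {(\<alpha>, A, B). A \<subseteq> X \<and> B \<subseteq> X}"

lemma finite_clauses_over:
  assumes "finite X"
  shows "finite (clauses_over X :: ('q::finite, 'a) clause set)"
proof (rule finite_subset)
  show "clauses_over X \<subseteq> (UNIV :: 'q set) \<times> Pow X \<times> Pow X"
    unfolding clauses_over_def by auto
  show "finite ((UNIV :: 'q set) \<times> Pow X \<times> Pow X)"
    using assms by simp
qed

lemma program_clauses_over_atoms: "P \<subseteq> clauses_over (atoms P)"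
  unfolding clauses_over_def atoms_def by auto

lemma finite_atoms: "ppdlp P \<Longrightarrow> finite (atoms P)"
  unfolding ppdlp_def atoms_def by auto

lemma T_op_inflationary: "P \<subseteq> T_op P"
  unfolding T_op_def by blast

lemma T_op_clauses_over: "P \<subseteq> clauses_over X \<Longrightarrow> T_op P \<subseteq> clauses_over X"
  unfolding T_op_def clauses_over_def ggppe_def by fastforce

lemma funpow_T_op_clauses_over:
  "P \<subseteq> clauses_over X \<Longrightarrow> (T_op ^^ k) P \<subseteq> clauses_over X"
  by (induction k) (simp_all add: T_op_clauses_over)

theorem proposition9:
  fixes P :: "('q::{finite, lattice}, 'a) clause set"
  assumes "ppdlp P"
  shows "\<exists>n::nat. n \<ge> 1 \<and> Gamma P n = Gamma P (n - 1)"
proof -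
  let ?U = "clauses_over (atoms P) :: ('q, 'a) clause set"
  have "(T_op ^^ k) (T_op P) \<subseteq> ?U" for k
    by (intro funpow_T_op_clauses_over T_op_clauses_over program_clauses_over_atoms)
  moreover have "finite ?U"
    using finite_clauses_over finite_atoms[OF assms] by blast
  ultimately obtain n where "(T_op ^^ Suc n) (T_op P) = (T_op ^^ n) (T_op P)"
    using inflationary_funpow_stabilises[OF T_op_inflationary] by blast
  then have "Gamma P (Suc n) = Gamma P n"
    unfolding Gamma_def by (simp only: funpow_Suc_right comp_apply)
  then show ?thesis
    by (intro exI[of _ "Suc n"]) simp
qed

end
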